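(* Let $R$ be a commutative Noetherian ring with unity such that the number of vertices of $\Gamma_E(R)$ is finite and greater than $2$. Then for any vertex $[y]$ of maximal degree in $\Gamma_E(R)$, $\operatorname{ann}(y)$ is a maximal element of $\mathfrak F=\{\operatorname{ann}(z)\mid 0\neq z\in R\}$, and hence is an associated prime of $R$.
   Context: For $x,y\in R$ write $x\sim y$ iff $\operatorname{ann}(x)=\operatorname{ann}(y)$; $[x]$ denotes the equivalence class of $x$. Let $Z^*(R)$ be the set of nonzero zero divisors of $R$. The graph $\Gamma_E(R)$ is the simple graph whose vertices are the classes $[x]$ with $x\in Z^*(R)$, two distinct vertices $[x],[y]$ being adjacent iff $xy=0$. The degree of a vertex is the number of vertices adjacent to it. An associated prime of $R$ is a prime ideal of the form $\operatorname{ann}(y)$, $y\in R$. *)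

theory Defs
  imports "HOL-Algebra.Algebra"
begin

definition ann :: "('a, 'b) ring_scheme \<Rightarrow> 'a \<Rightarrow> 'a set" where
  "ann R x = {r \<in> carrier R. r \<otimes>\<^bsub>R\<^esub> x = \<zero>\<^bsub>R\<^esub>}"

definition zdiv_star :: "('a, 'b) ring_scheme \<Rightarrow> 'a set" where
  "zdiv_star R = {x \<in> carrier R. x \<noteq> \<zero>\<^bsub>R\<^esub> \<and>
      (\<exists>y \<in> carrier R. y \<noteq> \<zero>\<^bsub>R\<^esub> \<and> x \<otimes>\<^bsub>R\<^esub> y = \<zero>\<^bsub>R\<^esub>)}"

definition cls :: "('a, 'b) ring_scheme \<Rightarrow> 'a \<Rightarrow> 'a set" where
  "cls R x = {y \<in> carrier R. ann R y = ann R x}"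

definition GE_vertices :: "('a, 'b) ring_scheme \<Rightarrow> 'a set set" where
  "GE_vertices R = cls R ` zdiv_star R"

definition GE_adj :: "('a, 'b) ring_scheme \<Rightarrow> 'a set \<Rightarrow> 'a set \<Rightarrow> bool" where
  "GE_adj R u v \<longleftrightarrow> u \<in> GE_vertices R \<and> v \<in> GE_vertices R \<and> u \<noteq> v \<and>
      (\<exists>x \<in> u. \<exists>y \<in> v. x \<otimes>\<^bsub>R\<^esub> y = \<zero>\<^bsub>R\<^esub>)"

definition GE_degree :: "('a, 'b) ring_scheme \<Rightarrow> 'a set \<Rightarrow> nat" where
  "GE_degree R v = card {u \<in> GE_vertices R. GE_adj R v u}"

definition ann_family :: "('a, 'b) ring_scheme \<Rightarrow> 'a set set" where
  "ann_family R = {ann R z | z. z \<in> carrier R \<and> z \<noteq> \<zero>\<^bsub>R\<^esub>}"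

definition associated_prime :: "('a, 'b) ring_scheme \<Rightarrow> 'a set \<Rightarrow> bool" where
  "associated_prime R P \<longleftrightarrow> primeideal P R \<and> (\<exists>y \<in> carrier R. P = ann R y)"

end

theory Submission
  imports Defs
begin

text \<open>
  Suppose \<open>ann(y)\<close> is not maximal in \<open>\<F>\<close>. Since there are only finitely many vertices,
  \<open>\<F>\<close> is finite, so \<open>ann(y) \<subset> P\<close> for a maximal \<open>P = ann(w)\<close>, which is prime.
  If \<open>P\<close> contained an element \<open>x\<close> with \<open>xy \<noteq> 0\<close> and \<open>[x] \<notin> {[y], [w]}\<close>, then every
  neighbour of \<open>[y]\<close> other than \<open>[w]\<close> would be a neighbour of \<open>[w]\<close>, \<open>[y]\<close> would be one
  as well, and \<open>[x]\<close> would be an extra one, contradicting the maximality of the degree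
  of \<open>[y]\<close>. If there is no such \<open>x\<close>, one checks that every annihilator of a zero divisor
  is \<open>P\<close> or \<open>ann(y)\<close>, so the graph has at most two vertices.
\<close>

lemma (in ring) additive_subgroup_subset_if_diff_subset:
  assumes A: "additive_subgroup A R" and P: "additive_subgroup P R"
    and J: "additive_subgroup J R"
    and "\<not> P \<subseteq> A" and diff: "P - A \<subseteq> J"
  shows "P \<subseteq> J"
proof
  fix p assume p: "p \<in> P"
  obtain a where a: "a \<in> P" "a \<notin> A" using \<open>\<not> P \<subseteq> A\<close> by blast
  have carr: "a \<in> carrier R" "p \<in> carrier R"
    using a p additive_subgroup.a_subset[OF P] by auto
  show "p \<in> J"
  proof (cases "p \<in> A")
    case True
    \<comment> \<open>\<open>a \<oplus> p\<close> and \<open>a\<close> both lie in \<open>P - A\<close>, hence in \<open>J\<close>, and so does their difference.\<close>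
    have "a \<oplus> p \<notin> A"
    proof
      assume "a \<oplus> p \<in> A"
      then have "a \<oplus> p \<oplus> \<ominus> p \<in> A"
        using True additive_subgroup.a_closed[OF A] additive_subgroup.a_inv_closed[OF A] by blast
      then show False using a carr by (simp add: a_assoc r_neg)
    qed
    then have "a \<oplus> p \<in> J" "a \<in> J"
      using a p diff additive_subgroup.a_closed[OF P] by auto
    then have "\<ominus> a \<oplus> (a \<oplus> p) \<in> J"
      using additive_subgroup.a_closed[OF J] additive_subgroup.a_inv_closed[OF J] by blast
    then show ?thesis using carr by (simp add: a_assoc[symmetric] l_neg)
  qed (use p diff in blast)
qed

context cring
begin

lemma mem_ann_commute:
  "r \<in> carrier R \<Longrightarrow> x \<in> carrier R \<Longrightarrow> r \<in> ann R x \<longleftrightarrow> x \<in> ann R r"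
  by (auto simp: ann_def m_comm)

lemma ideal_ann:
  assumes "x \<in> carrier R"
  shows "ideal (ann R x) R"
proof (rule idealI[OF ring_axioms])
  show "subgroup (ann R x) (add_monoid R)"
    by (rule add.subgroupI) (use assms in \<open>auto simp: ann_def l_distr l_minus\<close>)
next
  fix a r assume a: "a \<in> ann R x" and r: "r \<in> carrier R"
  then show ra: "r \<otimes> a \<in> ann R x" using assms by (simp add: ann_def m_assoc)
  have "a \<otimes> r = r \<otimes> a" using a r by (simp add: ann_def m_comm)
  then show "a \<otimes> r \<in> ann R x" using ra by simp
qed

lemma additive_subgroup_ann: "x \<in> carrier R \<Longrightarrow> additive_subgroup (ann R x) R"
  using ideal.axioms(1)[OF ideal_ann] .

lemma one_notin_ann: "x \<in> carrier R \<Longrightarrow> x \<noteq> \<zero> \<Longrightarrow> \<one> \<notin> ann R x"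
  by (simp add: ann_def)

lemma ann_subset_ann_mult:
  "b \<in> carrier R \<Longrightarrow> x \<in> carrier R \<Longrightarrow> ann R x \<subseteq> ann R (b \<otimes> x)"
proof
  fix r assume b: "b \<in> carrier R" and x: "x \<in> carrier R" and r: "r \<in> ann R x"
  then have "r \<otimes> (b \<otimes> x) = b \<otimes> (r \<otimes> x)" by (simp add: ann_def m_lcomm)
  then show "r \<in> ann R (b \<otimes> x)" using r b by (simp add: ann_def)
qed

lemma ann_family_memI: "z \<in> carrier R \<Longrightarrow> z \<noteq> \<zero> \<Longrightarrow> ann R z \<in> ann_family R"
  by (auto simp: ann_family_def)

lemma primeideal_ann_if_maximal:
  assumes w: "w \<in> carrier R" "w \<noteq> \<zero>"
    and max: "\<forall>I \<in> ann_family R. ann R w \<subseteq> I \<longrightarrow> I = ann R w"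
  shows "primeideal (ann R w) R"
proof (rule primeidealI[OF ideal_ann[OF w(1)] is_cring])
  show "carrier R \<noteq> ann R w"
    using one_notin_ann[OF w] by blast
next
  fix a b assume ab: "a \<in> carrier R" "b \<in> carrier R" "a \<otimes> b \<in> ann R w"
  show "a \<in> ann R w \<or> b \<in> ann R w"
  proof (cases "b \<in> ann R w")
    case False
    \<comment> \<open>\<open>ann(w) \<subseteq> ann(bw) \<in> \<F>\<close>, so maximality forces equality, and \<open>a \<in> ann(bw)\<close>.\<close>
    then have "b \<otimes> w \<noteq> \<zero>" using ab by (simp add: ann_def)
    then have "ann R (b \<otimes> w) \<in> ann_family R" using ab w by (simp add: ann_family_memI)
    then have "ann R (b \<otimes> w) = ann R w"
      using max ann_subset_ann_mult[OF ab(2) w(1)] by blast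
    moreover have "a \<in> ann R (b \<otimes> w)"
      using ab w by (simp add: ann_def m_assoc[symmetric])
    ultimately show ?thesis by simp
  qed simp
qed

lemma zdiv_star_iff:
  "x \<in> zdiv_star R \<longleftrightarrow> x \<in> carrier R \<and> x \<noteq> \<zero> \<and> (\<exists>t \<in> carrier R. t \<noteq> \<zero> \<and> t \<otimes> x = \<zero>)"
  unfolding zdiv_star_def using m_comm by auto

lemma zdiv_star_if_ann_subset:
  assumes "y \<in> zdiv_star R" "w \<in> carrier R" "w \<noteq> \<zero>" "ann R y \<subseteq> ann R w"
  shows "w \<in> zdiv_star R"
proof -
  obtain t where t: "t \<in> carrier R" "t \<noteq> \<zero>" "t \<otimes> y = \<zero>"
    using assms(1) by (auto simp: zdiv_star_iff)
  then have "t \<in> ann R w" using assms(4) by (auto simp: ann_def)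
  then show ?thesis using t assms(2,3) by (auto simp: zdiv_star_iff ann_def)
qed

lemma cls_self: "x \<in> carrier R \<Longrightarrow> x \<in> cls R x"
  by (simp add: cls_def)

lemma cls_eq_iff:
  "a \<in> carrier R \<Longrightarrow> b \<in> carrier R \<Longrightarrow> cls R a = cls R b \<longleftrightarrow> ann R a = ann R b"
  unfolding cls_def by auto

lemma zdiv_star_if_cls_vertex:
  assumes y: "y \<in> carrier R" and "cls R y \<in> GE_vertices R"
  shows "y \<in> zdiv_star R"
proof -
  obtain z where z: "z \<in> zdiv_star R" "cls R y = cls R z"
    using assms(2) by (auto simp: GE_vertices_def)
  have z_carr: "z \<in> carrier R" "z \<noteq> \<zero>" using z(1) by (auto simp: zdiv_star_def)
  have ann_eq: "ann R y = ann R z" using z(2) cls_eq_iff[OF y z_carr(1)] by simp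
  have "y \<noteq> \<zero>"
  proof
    assume "y = \<zero>"
    then have "\<one> \<in> ann R y" by (simp add: ann_def)
    then show False using one_notin_ann[OF z_carr] ann_eq by simp
  qed
  then show ?thesis using zdiv_star_if_ann_subset[OF z(1) y] ann_eq by blast
qed

lemma finite_ann_family:
  assumes "finite (GE_vertices R)"
  shows "finite (ann_family R)"
proof -
  \<comment> \<open>\<open>ann\<close> is constant on classes; a non-zero-divisor has annihilator \<open>{\<zero>}\<close>.\<close>
  let ?ann_of_class = "\<lambda>u. ann R (SOME t. t \<in> u)"
  have "ann_family R \<subseteq> insert {\<zero>} (?ann_of_class ` GE_vertices R)"
  proof
    fix I assume "I \<in> ann_family R"
    then obtain z where z: "z \<in> carrier R" "z \<noteq> \<zero>" "I = ann R z"
      by (auto simp: ann_family_def)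
    show "I \<in> insert {\<zero>} (?ann_of_class ` GE_vertices R)"
    proof (cases "z \<in> zdiv_star R")
      case True
      have "(SOME t. t \<in> cls R z) \<in> cls R z" using cls_self[OF z(1)] by (rule someI)
      then have "?ann_of_class (cls R z) = I" using z by (simp add: cls_def)
      then show ?thesis using True by (auto simp: GE_vertices_def)
    next
      case False
      then show ?thesis using z by (auto simp: zdiv_star_iff ann_def)
    qed
  qed
  then show ?thesis using assms finite_subset by blast
qed

lemma GE_adj_cls_iff:
  assumes a: "a \<in> zdiv_star R" and b: "b \<in> zdiv_star R"
  shows "GE_adj R (cls R a) (cls R b) \<longleftrightarrow> ann R a \<noteq> ann R b \<and> a \<otimes> b = \<zero>"
proof -
  have carr: "a \<in> carrier R" "b \<in> carrier R" using a b by (auto simp: zdiv_star_def)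
  have vertices: "cls R a \<in> GE_vertices R" "cls R b \<in> GE_vertices R"
    using a b by (auto simp: GE_vertices_def)
  have "(\<exists>x \<in> cls R a. \<exists>y \<in> cls R b. x \<otimes> y = \<zero>) \<longleftrightarrow> a \<otimes> b = \<zero>"
  proof
    assume "\<exists>x \<in> cls R a. \<exists>y \<in> cls R b. x \<otimes> y = \<zero>"
    then obtain x y where x: "x \<in> carrier R" "ann R x = ann R a"
      and y: "y \<in> carrier R" "ann R y = ann R b" and xy: "x \<otimes> y = \<zero>"
      by (auto simp: cls_def)
    have "x \<in> ann R y" using x(1) xy by (simp add: ann_def)
    then have "x \<in> ann R b" using y(2) by simp
    then have "b \<in> ann R a" using x carr mem_ann_commute by simp
    then show "a \<otimes> b = \<zero>" using carr by (simp add: ann_def m_comm)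
  next
    assume "a \<otimes> b = \<zero>"
    then show "\<exists>x \<in> cls R a. \<exists>y \<in> cls R b. x \<otimes> y = \<zero>"
      using cls_self[OF carr(1)] cls_self[OF carr(2)] by blast
  qed
  then show ?thesis
    unfolding GE_adj_def by (simp add: vertices cls_eq_iff[OF carr])
qed

lemma mem_GE_neighbours_iff:
  assumes "a \<in> zdiv_star R"
  shows "u \<in> {v \<in> GE_vertices R. GE_adj R (cls R a) v} \<longleftrightarrow>
    (\<exists>z \<in> zdiv_star R. u = cls R z \<and> ann R z \<noteq> ann R a \<and> a \<otimes> z = \<zero>)"
proof
  assume "u \<in> {v \<in> GE_vertices R. GE_adj R (cls R a) v}"
  then obtain z where "z \<in> zdiv_star R" "u = cls R z" "GE_adj R (cls R a) (cls R z)"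
    by (auto simp: GE_vertices_def)
  then show "\<exists>z \<in> zdiv_star R. u = cls R z \<and> ann R z \<noteq> ann R a \<and> a \<otimes> z = \<zero>"
    using GE_adj_cls_iff[OF assms] by auto
qed (auto simp: GE_adj_cls_iff[OF assms] GE_vertices_def)

lemma GE_degree_less_if_ann_subset:
  assumes fin: "finite (GE_vertices R)"
    and y: "y \<in> zdiv_star R" and w: "w \<in> zdiv_star R"
    and sub: "ann R y \<subset> ann R w"
    and x: "x \<in> ann R w" "x \<otimes> y \<noteq> \<zero>" "ann R x \<noteq> ann R w" "ann R x \<noteq> ann R y"
  shows "GE_degree R (cls R y) < GE_degree R (cls R w)"
proof -
  define N where "N a = {v \<in> GE_vertices R. GE_adj R (cls R a) v}" for a
  \<comment> \<open>Replacing the neighbour \<open>[w]\<close> of \<open>[y]\<close> by \<open>[y]\<close> itself maps \<open>N y\<close> injectively into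
      \<open>N w\<close>, missing \<open>[x]\<close>.\<close>
  define f where "f u = (if u = cls R w then cls R y else u)" for u
  have carr: "y \<in> carrier R" "w \<in> carrier R" "x \<in> carrier R"
    using y w x by (auto simp: zdiv_star_def ann_def)
  have xw: "x \<otimes> w = \<zero>" using x by (simp add: ann_def)
  have x_zdiv: "x \<in> zdiv_star R"
    using carr xw x(2) w by (auto simp: zdiv_star_iff m_comm)
  have image: "f ` N y \<subseteq> N w - {cls R x}"
  proof
    fix v assume "v \<in> f ` N y"
    then obtain z where z: "z \<in> zdiv_star R" "ann R z \<noteq> ann R y" "y \<otimes> z = \<zero>"
      and v: "v = f (cls R z)"
      using mem_GE_neighbours_iff[OF y] by (auto simp: N_def)
    have z_carr: "z \<in> carrier R" using z by (simp add: zdiv_star_def)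
    have y_ann_z: "y \<in> ann R z" using z carr by (simp add: ann_def)
    show "v \<in> N w - {cls R x}"
    proof (cases "cls R z = cls R w")
      case True
      then have "y \<in> ann R w" using y_ann_z cls_eq_iff[OF z_carr carr(2)] by simp
      then have "w \<otimes> y = \<zero>" using carr by (simp add: ann_def m_comm)
      then have "cls R y \<in> N w"
        unfolding N_def mem_GE_neighbours_iff[OF w] using y sub by blast
      moreover have "cls R y \<noteq> cls R x" using cls_eq_iff carr x by auto
      ultimately show ?thesis using True v by (simp add: f_def)
    next
      case False
      have "z \<in> ann R y" using y_ann_z z_carr carr mem_ann_commute by blast
      then have "w \<otimes> z = \<zero>" using sub carr z_carr by (auto simp: ann_def m_comm)
      then have "cls R z \<in> N w"
        using mem_GE_neighbours_iff[OF w] z False cls_eq_iff[OF z_carr carr(2)]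
        by (auto simp: N_def)
      moreover have "cls R z \<noteq> cls R x"
      proof
        assume "cls R z = cls R x"
        then have "y \<in> ann R x" using y_ann_z cls_eq_iff[OF z_carr carr(3)] by simp
        then show False using x(2) carr by (simp add: ann_def m_comm)
      qed
      ultimately show ?thesis using False v by (simp add: f_def)
    qed
  qed
  have "cls R y \<notin> N y" by (auto simp: N_def GE_adj_def)
  then have "inj_on f (N y)" by (auto simp: inj_on_def f_def)
  moreover have "finite (N w)" using fin by (simp add: N_def)
  moreover have "cls R x \<in> N w"
    using mem_GE_neighbours_iff[OF w] x_zdiv x xw carr by (auto simp: N_def m_comm)
  ultimately have "card (N y) < card (N w)"
    using image card_inj_on_le[of f "N y" "N w - {cls R x}"] card_Diff1_less[of "N w"]
    by (meson finite_Diff le_less_trans)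
  then show ?thesis by (simp add: GE_degree_def N_def)
qed

lemma ann_eq_if_mem_ann:
  assumes y: "y \<in> carrier R" and w: "w \<in> carrier R" and sub: "ann R y \<subset> ann R w"
    and max: "\<forall>I \<in> ann_family R. ann R w \<subseteq> I \<longrightarrow> I = ann R w"
    and only_two: "\<And>x. x \<in> ann R w \<Longrightarrow> x \<otimes> y \<noteq> \<zero> \<Longrightarrow> ann R x \<in> {ann R w, ann R y}"
    and b: "b \<in> ann R y" "b \<noteq> \<zero>"
  shows "ann R b = ann R w"
proof -
  have b_carr: "b \<in> carrier R" using b by (simp add: ann_def)
  have diff: "ann R w - ann R y \<subseteq> ann R b"
  proof
    fix q assume q: "q \<in> ann R w - ann R y"
    then have "q \<in> carrier R" "q \<otimes> y \<noteq> \<zero>" by (auto simp: ann_def)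
    then have "ann R q \<in> {ann R w, ann R y}" using only_two q by blast
    then have "b \<in> ann R q" using b sub by blast
    then show "q \<in> ann R b" using b_carr \<open>q \<in> carrier R\<close> mem_ann_commute by blast
  qed
  have "\<not> ann R w \<subseteq> ann R y" using sub by blast
  then have "ann R w \<subseteq> ann R b"
    using additive_subgroup_subset_if_diff_subset[OF additive_subgroup_ann[OF y]
        additive_subgroup_ann[OF w] additive_subgroup_ann[OF b_carr] _ diff] by blast
  moreover have "ann R b \<in> ann_family R" using ann_family_memI b_carr b by blast
  ultimately show ?thesis using max by blast
qed

lemma GE_vertices_subset_if_no_third_ann:
  assumes y: "y \<in> zdiv_star R" and w: "w \<in> carrier R" "w \<noteq> \<zero>"
    and sub: "ann R y \<subset> ann R w"
    and max: "\<forall>I \<in> ann_family R. ann R w \<subseteq> I \<longrightarrow> I = ann R w"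
    and only_two: "\<And>x. x \<in> ann R w \<Longrightarrow> x \<otimes> y \<noteq> \<zero> \<Longrightarrow> ann R x \<in> {ann R w, ann R y}"
  shows "GE_vertices R \<subseteq> {cls R w, cls R y}"
proof
  have y_carr: "y \<in> carrier R" using y by (simp add: zdiv_star_def)
  have nonzero_in_P: "ann R c \<in> {ann R w, ann R y}" if "c \<in> ann R w" "c \<noteq> \<zero>" for c
  proof (cases "c \<otimes> y = \<zero>")
    case True
    then have "c \<in> ann R y" using that by (simp add: ann_def)
    then show ?thesis using ann_eq_if_mem_ann[OF y_carr w(1) sub max only_two] that by blast
  qed (use only_two that in blast)
  fix u assume "u \<in> GE_vertices R"
  then obtain v where v: "v \<in> zdiv_star R" "u = cls R v" by (auto simp: GE_vertices_def)
  then obtain t where t: "t \<in> carrier R" "t \<noteq> \<zero>" "t \<otimes> v = \<zero>" and v_carr: "v \<in> carrier R"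
    by (auto simp: zdiv_star_iff)
  have "ann R v \<in> {ann R w, ann R y}"
  proof (cases "v \<in> ann R w")
    case True
    then show ?thesis using nonzero_in_P v by (simp add: zdiv_star_def)
  next
    case False
    \<comment> \<open>Impossible: primality puts \<open>t\<close> into \<open>ann(w)\<close>, and then \<open>v \<in> ann(t) \<subseteq> ann(w)\<close>.\<close>
    have "t \<otimes> v \<in> ann R w" using t(3) w(1) by (simp add: ann_def)
    then have "t \<in> ann R w"
      using primeideal.I_prime[OF primeideal_ann_if_maximal[OF w max] t(1) v_carr] False
      by blast
    then have "ann R t \<subseteq> ann R w" using nonzero_in_P t sub by auto
    moreover have "v \<in> ann R t" using t v_carr by (simp add: ann_def m_comm)
    ultimately show ?thesis using False by blast
  qed
  then show "u \<in> {cls R w, cls R y}"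
    using v cls_eq_iff[OF v_carr w(1)] cls_eq_iff[OF v_carr y_carr] by auto
qed

lemma exists_third_ann:
  assumes fin: "finite (GE_vertices R)" and card: "card (GE_vertices R) > 2"
    and y: "y \<in> zdiv_star R" and w: "w \<in> carrier R" "w \<noteq> \<zero>"
    and sub: "ann R y \<subset> ann R w"
    and max: "\<forall>I \<in> ann_family R. ann R w \<subseteq> I \<longrightarrow> I = ann R w"
  obtains x where "x \<in> ann R w" "x \<otimes> y \<noteq> \<zero>" "ann R x \<noteq> ann R w" "ann R x \<noteq> ann R y"
proof -
  have "\<not> GE_vertices R \<subseteq> {cls R w, cls R y}"
  proof
    assume "GE_vertices R \<subseteq> {cls R w, cls R y}"
    then have "card (GE_vertices R) \<le> card {cls R w, cls R y}" by (simp add: card_mono)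
    also have "\<dots> \<le> 2" by (simp add: card_insert_if)
    finally show False using card by simp
  qed
  then obtain x where "x \<in> ann R w" "x \<otimes> y \<noteq> \<zero>" "ann R x \<notin> {ann R w, ann R y}"
    using GE_vertices_subset_if_no_third_ann[OF y w sub max] by blast
  then show ?thesis using that by simp
qed

lemma ann_maximal_if_max_degree:
  assumes fin: "finite (GE_vertices R)" and card: "card (GE_vertices R) > 2"
    and y: "y \<in> zdiv_star R"
    and max_deg: "\<forall>v \<in> GE_vertices R. GE_degree R v \<le> GE_degree R (cls R y)"
  shows "\<forall>I \<in> ann_family R. ann R y \<subseteq> I \<longrightarrow> I = ann R y"
proof (intro ballI impI, rule ccontr)
  fix J assume J: "J \<in> ann_family R" "ann R y \<subseteq> J" "J \<noteq> ann R y"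
  have "finite (ann_family R)" using finite_ann_family[OF fin] .
  then obtain P where P: "P \<in> ann_family R" "J \<subseteq> P"
    and P_max: "\<forall>I \<in> ann_family R. P \<subseteq> I \<longrightarrow> P = I"
    using finite_has_maximal2[OF _ J(1)] by blast
  then obtain w where w: "w \<in> carrier R" "w \<noteq> \<zero>" "P = ann R w"
    by (auto simp: ann_family_def)
  have sub: "ann R y \<subset> ann R w" using J P w by auto
  have w_zdiv: "w \<in> zdiv_star R" using zdiv_star_if_ann_subset[OF y w(1,2)] sub by blast
  have w_max: "\<forall>I \<in> ann_family R. ann R w \<subseteq> I \<longrightarrow> I = ann R w"
    using P_max w(3) by blast
  obtain x where "x \<in> ann R w" "x \<otimes> y \<noteq> \<zero>" "ann R x \<noteq> ann R w" "ann R x \<noteq> ann R y"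
    using exists_third_ann[OF fin card y w(1,2) sub w_max] .
  then have "GE_degree R (cls R y) < GE_degree R (cls R w)"
    using GE_degree_less_if_ann_subset[OF fin y w_zdiv sub] by blast
  moreover have "cls R w \<in> GE_vertices R" using w_zdiv by (simp add: GE_vertices_def)
  ultimately show False using max_deg by (meson leD)
qed

end

theorem theorem3p6:
  fixes R :: "('a, 'b) ring_scheme" and y :: 'a
  assumes "cring R" and "noetherian_ring R"
    and "finite (GE_vertices R)" and "card (GE_vertices R) > 2"
    and "y \<in> carrier R" and "cls R y \<in> GE_vertices R"
    and "\<forall>v \<in> GE_vertices R. GE_degree R v \<le> GE_degree R (cls R y)"
  shows "ann R y \<in> ann_family R
    \<and> (\<forall>I \<in> ann_family R. ann R y \<subseteq> I \<longrightarrow> I = ann R y)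
    \<and> associated_prime R (ann R y)"
proof -
  interpret cring R by fact
  have y: "y \<in> zdiv_star R" using zdiv_star_if_cls_vertex assms(5,6) .
  then have y_carr: "y \<in> carrier R" "y \<noteq> \<zero>\<^bsub>R\<^esub>" by (auto simp: zdiv_star_def)
  have max: "\<forall>I \<in> ann_family R. ann R y \<subseteq> I \<longrightarrow> I = ann R y"
    using ann_maximal_if_max_degree assms(3,4,7) y by blast
  then have "primeideal (ann R y) R" using primeideal_ann_if_maximal y_carr by blast
  then show ?thesis
    using max ann_family_memI y_carr by (auto simp: associated_prime_def)
qed

end
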